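(* Let $x=\{x_i^t\}$ and $y=\{y_i^t\}$ be two arbitrary, possibly fractional, allocations and let $X_i^t=\sum_{\tau=1}^tx_i^\tau$. Then for every transaction $i$ and every horizon $T$, $$\sum_{t=1}^Tx_i^tv_i^t\ge\sum_{t=1}^TX_i^ty_i^tv_i^t.$$
   Context: Online block packing: $m$ resources with capacities $B_j>0$; transactions $i$ with arrival time $a_i\in\{1,2,\dots\}$, base value $v_i\ge0$, discount $\rho_i\in[0,1]$, demand $w_i\in\mathbb{R}_+^m$; $v_i^t:=v_i(1-\rho_i)^{t-a_i}$. A fractional allocation is $\{x_i^t\}$ with $x_i^t\in[0,1]$, $x_i^t=0$ for $t<a_i$, $\sum_tx_i^t\le1$, and $\sum_iw_{ij}x_i^t\le B_j$ for all $t,j$. *)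

theory Defs
  imports Complex_Main
begin

text \<open>Transactions form a finite set N (type 'a); resources are indexed by j < m;
 times are t = 1, 2, ...; w i j is the demand of transaction i on resource j.\<close>

definition val :: "('a \<Rightarrow> real) \<Rightarrow> ('a \<Rightarrow> real) \<Rightarrow> ('a \<Rightarrow> nat) \<Rightarrow> 'a \<Rightarrow> nat \<Rightarrow> real" where
  "val v \<rho> a i t = v i * (1 - \<rho> i) powi (int t - int (a i))"

definition is_allocation ::
  "'a set \<Rightarrow> nat \<Rightarrow> (nat \<Rightarrow> real) \<Rightarrow> ('a \<Rightarrow> nat \<Rightarrow> real) \<Rightarrow> ('a \<Rightarrow> nat)
   \<Rightarrow> ('a \<Rightarrow> nat \<Rightarrow> real) \<Rightarrow> bool" where
  "is_allocation N m B w a x \<longleftrightarrow>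
     (\<forall>i\<in>N. \<forall>t\<ge>1. 0 \<le> x i t \<and> x i t \<le> 1) \<and>
     (\<forall>i\<in>N. \<forall>t. 1 \<le> t \<and> t < a i \<longrightarrow> x i t = 0) \<and>
     (\<forall>i\<in>N. \<forall>T. (\<Sum>t=1..T. x i t) \<le> 1) \<and>
     (\<forall>t\<ge>1. \<forall>j<m. (\<Sum>i\<in>N. w i j * x i t) \<le> B j)"

end

theory Submission
  imports Defs
begin

text \<open>Swapping the order of summation rewrites the right-hand side as the sum over
  tau of x(tau) times the sum over t >= tau of y(t) v(t). As x(tau) = 0 before the arrival
  time and v is non-increasing from the arrival time on, each inner sum is at most v(tau)
  times the total of y, which is at most v(tau).\<close>

lemma sum_prefix_mult_swap:
  fixes f g :: "nat \<Rightarrow> 'a::semiring_0"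
  shows "(\<Sum>t=m..n. (\<Sum>s=m..t. f s) * g t) = (\<Sum>s=m..n. f s * (\<Sum>t=s..n. g t))"
proof -
  have "(\<Sum>t=m..n. (\<Sum>s=m..t. f s) * g t) = (\<Sum>t=m..n. \<Sum>s\<in>{s\<in>{m..n}. s \<le> t}. f s * g t)"
    by (intro sum.cong) (auto simp: sum_distrib_right intro!: sum.cong)
  also have "\<dots> = (\<Sum>s=m..n. \<Sum>t\<in>{t\<in>{m..n}. s \<le> t}. f s * g t)"
    by (rule sum.swap_restrict) auto
  also have "\<dots> = (\<Sum>s=m..n. f s * (\<Sum>t=s..n. g t))"
    by (intro sum.cong) (auto simp: sum_distrib_left intro!: sum.cong)
  finally show ?thesis .
qed

lemma sum_prefix_weighted_le:
  fixes x y V :: "nat \<Rightarrow> real" and a T :: nat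
  assumes x_nonneg: "\<And>t. 1 \<le> t \<Longrightarrow> 0 \<le> x t"
    and x_before: "\<And>t. 1 \<le> t \<Longrightarrow> t < a \<Longrightarrow> x t = 0"
    and y_nonneg: "\<And>t. 1 \<le> t \<Longrightarrow> 0 \<le> y t"
    and y_sum: "(\<Sum>t=1..T. y t) \<le> 1"
    and V_nonneg: "\<And>t. 0 \<le> V t"
    and V_antimono: "\<And>s t. a \<le> s \<Longrightarrow> s \<le> t \<Longrightarrow> V t \<le> V s"
  shows "(\<Sum>t=1..T. (\<Sum>s=1..t. x s) * y t * V t) \<le> (\<Sum>t=1..T. x t * V t)"
proof -
  have tail_le: "x s * (\<Sum>t=s..T. y t * V t) \<le> x s * V s" if s: "s \<in> {1..T}" for s
  proof (cases "s < a")
    case True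
    then show ?thesis using x_before s by simp
  next
    case False
    have "(\<Sum>t=s..T. y t * V t) \<le> (\<Sum>t=s..T. y t * V s)"
      using False s by (intro sum_mono mult_left_mono V_antimono y_nonneg) auto
    also have "\<dots> = V s * (\<Sum>t=s..T. y t)"
      by (simp add: sum_distrib_left mult.commute)
    also have "(\<Sum>t=s..T. y t) \<le> (\<Sum>t=1..T. y t)"
      using s y_nonneg by (intro sum_mono2) auto
    then have "V s * (\<Sum>t=s..T. y t) \<le> V s"
      using y_sum V_nonneg mult_left_le by (metis order.trans)
    finally show ?thesis
      using x_nonneg s by (intro mult_left_mono) auto
  qed
  have "(\<Sum>t=1..T. (\<Sum>s=1..t. x s) * y t * V t) = (\<Sum>s=1..T. x s * (\<Sum>t=s..T. y t * V t))"
    using sum_prefix_mult_swap[where f = x and g = "\<lambda>t. y t * V t"] by (simp add: mult.assoc)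
  also have "\<dots> \<le> (\<Sum>s=1..T. x s * V s)"
    using tail_le by (rule sum_mono)
  finally show ?thesis .
qed

lemma val_nonneg:
  assumes "0 \<le> v i" "\<rho> i \<le> 1"
  shows "0 \<le> val v \<rho> a i t"
  using assms unfolding val_def by simp

lemma val_antimono:
  assumes "0 \<le> v i" "0 \<le> \<rho> i" "\<rho> i \<le> 1" "a i \<le> s" "s \<le> t"
  shows "val v \<rho> a i t \<le> val v \<rho> a i s"
proof -
  have exponents: "int t - int (a i) = int (t - a i)" "int s - int (a i) = int (s - a i)"
    using assms(4,5) by auto
  have "(1 - \<rho> i) ^ (t - a i) \<le> (1 - \<rho> i) ^ (s - a i)"
    using assms(2,3,5) by (intro power_decreasing) auto
  then show ?thesis
    unfolding val_def exponents power_int_of_nat using assms(1) by (rule mult_left_mono)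
qed

theorem lemma2:
  fixes N :: "'a set" and m :: nat and B :: "nat \<Rightarrow> real"
    and w :: "'a \<Rightarrow> nat \<Rightarrow> real" and a :: "'a \<Rightarrow> nat"
    and v \<rho> :: "'a \<Rightarrow> real" and x y :: "'a \<Rightarrow> nat \<Rightarrow> real"
    and i :: 'a and T :: nat
  assumes "finite N"
    and "\<forall>j<m. B j > 0"
    and "\<forall>k\<in>N. a k \<ge> 1"
    and "\<forall>k\<in>N. v k \<ge> 0"
    and "\<forall>k\<in>N. 0 \<le> \<rho> k \<and> \<rho> k \<le> 1"
    and "\<forall>k\<in>N. \<forall>j<m. w k j \<ge> 0"
    and "is_allocation N m B w a x"
    and "is_allocation N m B w a y"
    and "i \<in> N"
  shows "(\<Sum>t=1..T. x i t * val v \<rho> a i t)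
         \<ge> (\<Sum>t=1..T. (\<Sum>\<tau>=1..t. x i \<tau>) * y i t * val v \<rho> a i t)"
proof -
  have v: "0 \<le> v i" "0 \<le> \<rho> i" "\<rho> i \<le> 1"
    using assms(4,5,9) by auto
  show ?thesis
  proof (rule sum_prefix_weighted_le[where a = "a i"])
    show "\<And>t. 1 \<le> t \<Longrightarrow> 0 \<le> x i t" "\<And>t. 1 \<le> t \<Longrightarrow> t < a i \<Longrightarrow> x i t = 0"
      "\<And>t. 1 \<le> t \<Longrightarrow> 0 \<le> y i t" "(\<Sum>t=1..T. y i t) \<le> 1"
      using assms(7-9) unfolding is_allocation_def by auto
    show "\<And>t. 0 \<le> val v \<rho> a i t"
      using v by (intro val_nonneg)
    show "\<And>s t. a i \<le> s \<Longrightarrow> s \<le> t \<Longrightarrow> val v \<rho> a i t \<le> val v \<rho> a i s"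
      using v by (intro val_antimono)
  qed
qed

end
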